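(* Let the setting and notation be as in the context. Assume the velocity field $\boldsymbol{v}(\boldsymbol{x},t)=\mathbb{E}[\alpha_t'\boldsymbol{x}_0+\sigma_t'\boldsymbol{z}\mid \boldsymbol{x}_t=\boldsymbol{x}]$ is $L$-Lipschitz in its first argument: $\|\boldsymbol{v}(\boldsymbol{x}_1,t)-\boldsymbol{v}(\boldsymbol{x}_2,t)\|_2\le L\|\boldsymbol{x}_1-\boldsymbol{x}_2\|_2$ for all $\boldsymbol{x}_1,\boldsymbol{x}_2\in\mathbb{R}^n$, $t\in[0,1]$. Consider the SDEI loss $$\mathcal{L}_{\mathrm{SDEI}}(\theta)=\mathbb{E}_{\boldsymbol{x}_0,\boldsymbol{z},t,s,\,r\sim\mathcal{U}(t,s)}\big\|\boldsymbol{f}_\theta(\boldsymbol{x}_t,t,s)-\boldsymbol{v}\big(\boldsymbol{x}_t+(r-t)\boldsymbol{f}_{\theta^-}(\boldsymbol{x}_t,t,r),\,r\big)\big\|_2^2 .$$ Then for each fixed $t$ there is $h>0$ such that the following holds: if $\boldsymbol{f}_\theta$ attains the minimum of $\mathcal{L}_{\mathrm{SDEI}}$ (in the stop-gradient sense: with $\theta^-=\theta$ held fixed in the target, $\boldsymbol{f}_\theta$ minimizes the loss over all functions of $(\boldsymbol{x}_t,t,s)$), then $\boldsymbol{f}_\theta(\boldsymbol{x}_t,t,s)=\boldsymbol{f}(\boldsymbol{x}_t,t,s)$ for all $s$ with $|s-t|\le h$, where $\boldsymbol{f}$ is the secant function.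
   Context: Let $p_d$ be a data distribution on $\mathbb{R}^n$, $\boldsymbol{x}_0\sim p_d$, $\boldsymbol{z}\sim\mathcal{N}(\boldsymbol{0},\boldsymbol{I})$ independent, and let $\alpha_t,\sigma_t$ be differentiable functions on $[0,1]$ with derivatives $\alpha_t',\sigma_t'$. Set $\boldsymbol{x}_t=\alpha_t\boldsymbol{x}_0+\sigma_t\boldsymbol{z}$. The velocity field is $\boldsymbol{v}(\boldsymbol{x}_t,t)=\mathbb{E}[\alpha_t'\boldsymbol{x}_0+\sigma_t'\boldsymbol{z}\mid\boldsymbol{x}_t]$, and the probability-flow ODE is $\frac{d\boldsymbol{x}_t}{dt}=\boldsymbol{v}(\boldsymbol{x}_t,t)$; for a point $\boldsymbol{x}_t$ at time $t$, $\boldsymbol{x}_r$ denotes the solution of this ODE at time $r$ passing through $\boldsymbol{x}_t$ at time $t$. The secant function is $\boldsymbol{f}(\boldsymbol{x}_t,t,s)=\boldsymbol{v}(\boldsymbol{x}_t,t)$ if $s=t$ and $\boldsymbol{f}(\boldsymbol{x}_t,t,s)=\frac{1}{s-t}\int_t^s\boldsymbol{v}(\boldsymbol{x}_r,r)\,dr$ if $s\neq t$. $\boldsymbol{f}_\theta(\boldsymbol{x},t,s)$ is a parametrized function (neural network) $\mathbb{R}^n\times[0,1]\times[0,1]\to\mathbb{R}^n$; $\theta^-$ denotes a stop-gradient copy of $\theta$ (same value, not differentiated). $r\sim\mathcal{U}(t,s)$ means $r$ uniform on $[\min\{t,s\},\max\{t,s\}]$, independent of $\boldsymbol{x}_0,\boldsymbol{z}$;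 $t,s$ are sampled independently of $\boldsymbol{x}_0,\boldsymbol{z}$. *)

theory Defs
  imports "HOL-Probability.Probability"
begin

definition unif_between :: "real \<Rightarrow> real \<Rightarrow> real measure" where
  "unif_between t s =
     (if s = t then return lborel t else uniform_measure lborel {min t s..max t s})"

text \<open>Phi is the flow of the probability-flow ODE dx/dr = v(x,r) on [0,1]:
  Phi x t r is the solution at time r passing through x at time t.\<close>
definition is_flow :: "('a::euclidean_space \<Rightarrow> real \<Rightarrow> 'a) \<Rightarrow> ('a \<Rightarrow> real \<Rightarrow> real \<Rightarrow> 'a) \<Rightarrow> bool" where
  "is_flow v Phi \<longleftrightarrow>
     (\<forall>x. \<forall>t\<in>{0..1}. Phi x t t = x \<and>
        (\<forall>r\<in>{0..1}. ((\<lambda>\<rho>. Phi x t \<rho>) has_vector_derivative v (Phi x t r) r) (at r within {0..1})))"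

definition oint :: "real \<Rightarrow> real \<Rightarrow> (real \<Rightarrow> 'a::euclidean_space) \<Rightarrow> 'a" where
  "oint t s g = (if t \<le> s then integral {t..s} g else - integral {s..t} g)"

definition secant :: "('a::euclidean_space \<Rightarrow> real \<Rightarrow> 'a) \<Rightarrow> ('a \<Rightarrow> real \<Rightarrow> real \<Rightarrow> 'a)
    \<Rightarrow> 'a \<Rightarrow> real \<Rightarrow> real \<Rightarrow> 'a" where
  "secant v Phi x t s =
     (if s = t then v x t else (1 / (s - t)) *\<^sub>R oint t s (\<lambda>r. v (Phi x t r) r))"

text \<open>SDEI target v(x_t + (r-t) f_{theta^-}(x_t,t,r), r), with theta^- = theta frozen.\<close>
definition sdei_target :: "('a::euclidean_space \<Rightarrow> real \<Rightarrow> 'a) \<Rightarrow> ('a \<Rightarrow> real \<Rightarrow> real \<Rightarrow> 'a)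
    \<Rightarrow> 'a \<Rightarrow> real \<Rightarrow> real \<Rightarrow> 'a" where
  "sdei_target v fm x t r = v (x + (r - t) *\<^sub>R fm x t r) r"

definition sdei_cond_loss :: "('a::euclidean_space \<Rightarrow> real \<Rightarrow> 'a) \<Rightarrow> ('a \<Rightarrow> real \<Rightarrow> real \<Rightarrow> 'a)
    \<Rightarrow> 'a \<Rightarrow> real \<Rightarrow> real \<Rightarrow> 'a \<Rightarrow> ennreal" where
  "sdei_cond_loss v fm x t s c =
     (\<integral>\<^sup>+ r. ennreal ((norm (c - sdei_target v fm x t r))\<^sup>2) \<partial>unif_between t s)"

text \<open>fm attains the minimum of the SDEI loss over all functions of (x_t,t,s)
  in the stop-gradient sense: for every (x,t,s) the target is a random variable,
  the loss is finite, and fm x t s minimises the conditional loss.\<close>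
definition sdei_minimizer :: "('a::euclidean_space \<Rightarrow> real \<Rightarrow> 'a) \<Rightarrow> ('a \<Rightarrow> real \<Rightarrow> real \<Rightarrow> 'a) \<Rightarrow> bool" where
  "sdei_minimizer v fm \<longleftrightarrow>
     (\<forall>x. \<forall>t\<in>{0..1}. \<forall>s\<in>{0..1}.
        sdei_target v fm x t \<in> borel_measurable (unif_between t s) \<and>
        sdei_cond_loss v fm x t s (fm x t s) < \<infinity> \<and>
        (\<forall>c. sdei_cond_loss v fm x t s (fm x t s) \<le> sdei_cond_loss v fm x t s c))"

end

theory Submission
  imports Defs
begin

(* For s \<noteq> t the conditional SDEI loss is a mean squared error over r ~ U(t,s), so its
   minimiser is the mean of the target:
     (s - t) f(x,t,s) = \<integral>_t^s v(x + (r - t) f(x,t,r), r) dr.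
   Hence the jump g(s) = x + (s - t) f(x,t,s) solves the integral form
   g(s) = x + \<integral>_t^s v(g(r), r) dr of the probability-flow ODE, exactly as the flow does.
   On an interval around t of length below 1/L the Lipschitz bound makes this integral
   equation a contraction in the sup norm, so g coincides with the flow there, and dividing
   by s - t yields the secant function. *)

lemma oint_diff:
  assumes "f integrable_on {min t s..max t s}" "g integrable_on {min t s..max t s}"
  shows "oint t s (\<lambda>r. f r - g r) = oint t s f - oint t s g"
  using assms by (cases "t \<le> s") (auto simp: oint_def min_def max_def integral_diff)

lemma norm_oint: "norm (oint t s f) = norm (integral {min t s..max t s} f)"
  by (simp add: oint_def min_def max_def)

lemma norm_oint_le:
  fixes f :: "real \<Rightarrow> 'a::euclidean_space"
  assumes f: "f integrable_on {min t s..max t s}"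
    and B: "\<And>r. r \<in> {min t s..max t s} \<Longrightarrow> norm (f r) \<le> B"
  shows "norm (oint t s f) \<le> B * \<bar>s - t\<bar>"
proof -
  have "0 \<le> B"
    using B[of t] by (auto intro: order_trans[OF norm_ge_zero])
  then have "norm (integral {min t s..max t s} f) \<le> B * Henstock_Kurzweil_Integration.content {min t s..max t s}"
    using f B by (intro has_integral_bound_real[where S = "{}"]) auto
  then show ?thesis
    by (cases "t \<le> s") (auto simp: norm_oint min_def max_def)
qed

lemma norm_oint_le_integral_norm:
  fixes f :: "real \<Rightarrow> 'a::euclidean_space"
  assumes f: "f absolutely_integrable_on {a..b}" and "t \<in> {a..b}" "s \<in> {a..b}"
  shows "norm (oint t s f) \<le> integral {a..b} (\<lambda>r. norm (f r))"
proof -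
  have sub: "{min t s..max t s} \<subseteq> {a..b}"
    using assms(2,3) by auto
  then have "f absolutely_integrable_on {min t s..max t s}"
    by (rule absolutely_integrable_on_subinterval[OF f])
  then have "norm (integral {min t s..max t s} f) \<le> integral {min t s..max t s} (\<lambda>r. norm (f r))"
    by (intro integral_norm_bound_integral) (auto simp: absolutely_integrable_on_def)
  also have "\<dots> \<le> integral {a..b} (\<lambda>r. norm (f r))"
    using f \<open>f absolutely_integrable_on {min t s..max t s}\<close> sub
    by (intro integral_subset_le) (auto simp: absolutely_integrable_on_def)
  finally show ?thesis
    by (simp add: norm_oint)
qed

lemma fundamental_theorem_of_calculus_oint:
  fixes f :: "real \<Rightarrow> 'a::euclidean_space"
  assumes "\<And>r. r \<in> {min t s..max t s} \<Longrightarrow>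
      (f has_vector_derivative f' r) (at r within {min t s..max t s})"
  shows "f' integrable_on {min t s..max t s}" and "f s = f t + oint t s f'"
proof -
  have "(f' has_integral (f (max t s) - f (min t s))) {min t s..max t s}"
    using assms by (intro fundamental_theorem_of_calculus) auto
  then show "f' integrable_on {min t s..max t s}" and "f s = f t + oint t s f'"
    by (auto simp: oint_def min_def max_def integral_unique integrable_on_def split: if_splits)
qed

lemma bounded_contraction_imp_zero:
  fixes e :: "'b \<Rightarrow> 'a::real_normed_vector"
  assumes bounded: "bounded (e ` S)" and c: "c < 1"
    and contraction: "\<And>B s. (\<And>r. r \<in> S \<Longrightarrow> norm (e r) \<le> B) \<Longrightarrow> s \<in> S \<Longrightarrow> norm (e s) \<le> c * B"
    and s: "s \<in> S"
  shows "e s = 0"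
proof -
  define M where "M = (SUP r\<in>S. norm (e r))"
  have "bdd_above ((\<lambda>r. norm (e r)) ` S)"
    using bounded unfolding bounded_iff bdd_above_def by auto
  then have le_M: "norm (e r) \<le> M" if "r \<in> S" for r
    unfolding M_def using that by (rule cSUP_upper2) simp
  have "M \<le> c * M"
    unfolding M_def using s le_M by (intro cSUP_least) (auto intro: contraction simp: M_def)
  then have "M \<le> 0"
    using c by (simp add: mult_le_cancel_right1)
  then have "norm (e s) \<le> 0"
    using le_M[OF s] by linarith
  then show ?thesis
    by simp
qed

lemma integral_equation_solution_unique:
  fixes w :: "'a::euclidean_space \<Rightarrow> real \<Rightarrow> 'a" and g \<phi> :: "real \<Rightarrow> 'a"
  assumes lip: "\<And>y z r. r \<in> {a..b} \<Longrightarrow> norm (w y r - w z r) \<le> L * norm (y - z)"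
    and L: "0 \<le> L" and short: "L * (b - a) < 1" and t: "t \<in> {a..b}"
    and bounded: "bounded (g ` {a..b})" "bounded (\<phi> ` {a..b})"
    and g: "\<And>s. s \<in> {a..b} \<Longrightarrow>
      (\<lambda>r. w (g r) r) integrable_on {min t s..max t s} \<and> g s = x + oint t s (\<lambda>r. w (g r) r)"
    and \<phi>: "\<And>s. s \<in> {a..b} \<Longrightarrow>
      (\<lambda>r. w (\<phi> r) r) integrable_on {min t s..max t s} \<and> \<phi> s = x + oint t s (\<lambda>r. w (\<phi> r) r)"
    and s: "s \<in> {a..b}"
  shows "g s = \<phi> s"
proof -
  have "(\<lambda>r. g r - \<phi> r) s = 0"
  proof (rule bounded_contraction_imp_zero[OF bounded_minus_comp[OF bounded] short _ s])
    fix B r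
    assume B: "\<And>r. r \<in> {a..b} \<Longrightarrow> norm (g r - \<phi> r) \<le> B" and r: "r \<in> {a..b}"
    have segment: "{min t r..max t r} \<subseteq> {a..b}"
      using t r by auto
    have "0 \<le> B"
      using B[OF t] by (rule order_trans[OF norm_ge_zero])
    have "g r - \<phi> r = oint t r (\<lambda>\<rho>. w (g \<rho>) \<rho> - w (\<phi> \<rho>) \<rho>)"
      using g[OF r] \<phi>[OF r] by (simp add: oint_diff)
    also have "norm \<dots> \<le> (L * B) * \<bar>r - t\<bar>"
    proof (rule norm_oint_le)
      show "(\<lambda>\<rho>. w (g \<rho>) \<rho> - w (\<phi> \<rho>) \<rho>) integrable_on {min t r..max t r}"
        using g[OF r] \<phi>[OF r] by (intro integrable_diff) auto
      fix \<rho> assume "\<rho> \<in> {min t r..max t r}"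
      with segment have "\<rho> \<in> {a..b}" by auto
      then show "norm (w (g \<rho>) \<rho> - w (\<phi> \<rho>) \<rho>) \<le> L * B"
        using lip[of \<rho> "g \<rho>" "\<phi> \<rho>"] B[of \<rho>] L by (meson mult_left_mono order_trans)
    qed
    also have "\<dots> \<le> (L * B) * (b - a)"
      using t r L \<open>0 \<le> B\<close> by (intro mult_left_mono) auto
    also have "\<dots> = (L * (b - a)) * B"
      by simp
    finally show "norm (g r - \<phi> r) \<le> (L * (b - a)) * B" .
  qed
  then show ?thesis by simp
qed

lemma (in prob_space) sq_loss_minimizer_eq_expectation:
  fixes Y :: "'a \<Rightarrow> 'b::euclidean_space"
  assumes Y[measurable]: "Y \<in> borel_measurable M"
    and finite: "(\<integral>\<^sup>+\<omega>. ennreal ((norm (c - Y \<omega>))\<^sup>2) \<partial>M) < \<infinity>"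
    and minimal: "\<And>d. (\<integral>\<^sup>+\<omega>. ennreal ((norm (c - Y \<omega>))\<^sup>2) \<partial>M)
                   \<le> (\<integral>\<^sup>+\<omega>. ennreal ((norm (d - Y \<omega>))\<^sup>2) \<partial>M)"
  shows "integrable M Y" and "c = expectation Y"
proof -
  have sq: "integrable M (\<lambda>\<omega>. (norm (c - Y \<omega>))\<^sup>2)"
    using finite by (intro integrableI_nonneg) auto
  then have "integrable M (\<lambda>\<omega>. norm (c - Y \<omega>))"
    by (rule square_integrable_imp_integrable[rotated]) measurable
  then have cY: "integrable M (\<lambda>\<omega>. c - Y \<omega>)"
    by (simp add: integrable_norm_iff)
  then show iY: "integrable M Y"
    using Bochner_Integration.integrable_diff[OF integrable_const[of c] cY] by simp
  define m where "m = expectation Y"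
  have expand: "(norm (m - Y \<omega>))\<^sup>2 = (norm (m - c))\<^sup>2 + 2 * ((m - c) \<bullet> (c - Y \<omega>)) + (norm (c - Y \<omega>))\<^sup>2"
    for \<omega>
    by (simp add: power2_norm_eq_inner inner_diff_left inner_diff_right inner_commute algebra_simps)
  have lin: "integrable M (\<lambda>\<omega>. 2 * ((m - c) \<bullet> (c - Y \<omega>)))"
    using cY by (intro integrable_mult_right integrable_inner_right)
  have sq_m: "integrable M (\<lambda>\<omega>. (norm (m - Y \<omega>))\<^sup>2)"
    unfolding expand by (intro Bochner_Integration.integrable_add integrable_const lin sq)
  have "(\<integral>\<omega>. c - Y \<omega> \<partial>M) = c - m"
    using iY by (simp add: Bochner_Integration.integral_diff prob_space m_def)
  then have "(\<integral>\<omega>. 2 * ((m - c) \<bullet> (c - Y \<omega>)) \<partial>M) = - 2 * (norm (m - c))\<^sup>2"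
    using cY by (simp add: power2_norm_eq_inner inner_minus_right[symmetric] del: inner_minus_right)
  then have loss_m: "(\<integral>\<omega>. (norm (m - Y \<omega>))\<^sup>2 \<partial>M) = (\<integral>\<omega>. (norm (c - Y \<omega>))\<^sup>2 \<partial>M) - (norm (m - c))\<^sup>2"
    unfolding expand using lin sq by (simp add: prob_space)
  have "(\<integral>\<omega>. (norm (c - Y \<omega>))\<^sup>2 \<partial>M) \<le> (\<integral>\<omega>. (norm (m - Y \<omega>))\<^sup>2 \<partial>M)"
    using minimal[of m]
    by (simp add: nn_integral_eq_integral[OF sq] nn_integral_eq_integral[OF sq_m] ennreal_le_iff)
  then show "c = expectation Y"
    unfolding loss_m by (simp add: m_def)
qed

lemma integral_uniform_measure_interval:
  fixes Y :: "real \<Rightarrow> 'a::euclidean_space"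
  assumes ab: "a < b" and Y: "integrable (uniform_measure lborel {a..b}) Y"
  shows "Y absolutely_integrable_on {a..b}"
    and "integral {a..b} Y = (b - a) *\<^sub>R (\<integral>r. Y r \<partial>uniform_measure lborel {a..b})"
proof -
  have "1 / ennreal (b - a) = ennreal (1 / (b - a))"
    using ab by (metis divide_ennreal ennreal_1 zero_le_one diff_gt_0_iff_gt)
  then have density: "uniform_measure lborel {a..b} = density lborel (\<lambda>r. ennreal (indicator {a..b} r / (b - a)))"
    unfolding uniform_measure_def using ab by (intro density_cong) (auto simp: indicator_def)
  have "sets (uniform_measure lborel {a..b}) = sets lborel"
    by simp
  then have [measurable]: "Y \<in> borel_measurable lborel"
    using borel_measurable_integrable[OF Y] unfolding measurable_cong_sets[OF _ refl] by simp
  have nonneg: "AE r in lborel. 0 \<le> indicator {a..b} r / (b - a)"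
    using ab by simp
  have "integrable lborel (\<lambda>r. (indicator {a..b} r / (b - a)) *\<^sub>R Y r)"
    using Y unfolding density by (subst (asm) integrable_density[OF _ _ nonneg]) simp_all
  then have "integrable lborel (\<lambda>r. (b - a) *\<^sub>R ((indicator {a..b} r / (b - a)) *\<^sub>R Y r))"
    by (rule integrable_scaleR_right)
  then have lborel: "set_integrable lborel {a..b} Y"
    using ab by (simp add: set_integrable_def)
  then show "Y absolutely_integrable_on {a..b}"
    by (simp add: set_integrable_def integrable_completion)
  have "(\<integral>r. Y r \<partial>uniform_measure lborel {a..b}) = (\<integral>r. (1 / (b - a)) *\<^sub>R (indicator {a..b} r *\<^sub>R Y r) \<partial>lborel)"
    unfolding density by (subst integral_density[OF _ _ nonneg]) simp_all
  also have "\<dots> = (1 / (b - a)) *\<^sub>R (LINT r:{a..b}|lborel. Y r)"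
    unfolding set_lebesgue_integral_def by (rule integral_scaleR_right)
  also have "\<dots> = (1 / (b - a)) *\<^sub>R integral {a..b} Y"
    by (simp add: set_borel_integral_eq_integral(2)[OF lborel])
  finally show "integral {a..b} Y = (b - a) *\<^sub>R (\<integral>r. Y r \<partial>uniform_measure lborel {a..b})"
    using ab by simp
qed

lemma sdei_minimizerD:
  assumes "sdei_minimizer v fm" and "t \<in> {0..1}" and "s \<in> {0..1}"
  shows "sdei_target v fm x t \<in> borel_measurable (unif_between t s)"
    and "sdei_cond_loss v fm x t s (fm x t s) < \<infinity>"
    and "sdei_cond_loss v fm x t s (fm x t s) \<le> sdei_cond_loss v fm x t s c"
  using assms unfolding sdei_minimizer_def by blast+

lemma sdei_minimizer_diagonal:
  assumes "sdei_minimizer v fm" and "t \<in> {0..1}"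
  shows "fm x t t = v x t"
proof -
  have [measurable]: "sdei_target v fm x t \<in> borel_measurable (return lborel t)"
    using sdei_minimizerD(1)[OF assms assms(2)] by (simp add: unif_between_def)
  have loss: "sdei_cond_loss v fm x t t c = ennreal ((norm (c - v x t))\<^sup>2)" for c
  proof -
    have "(\<lambda>r. ennreal ((norm (c - sdei_target v fm x t r))\<^sup>2)) \<in> borel_measurable (return lborel t)"
      by measurable
    then show ?thesis
      unfolding sdei_cond_loss_def unif_between_def
      by (simp add: nn_integral_return) (simp add: sdei_target_def)
  qed
  show ?thesis
    using sdei_minimizerD(3)[OF assms assms(2), of x "v x t"]
    unfolding loss by simp
qed

lemma sdei_minimizer_integral_equation:
  assumes m: "sdei_minimizer v fm" and t: "t \<in> {0..1}" and s: "s \<in> {0..1}"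
  shows "sdei_target v fm x t absolutely_integrable_on {min t s..max t s}
    \<and> (s - t) *\<^sub>R fm x t s = oint t s (sdei_target v fm x t)"
proof (cases "s = t")
  case True
  then show ?thesis
    using absolutely_integrable_on_null[of t t] by (auto simp: oint_def)
next
  case False
  define a where "a = min t s"
  define b where "b = max t s"
  have ab: "a < b"
    using False by (auto simp: a_def b_def)
  have U: "unif_between t s = uniform_measure lborel {a..b}"
    using False by (simp add: unif_between_def a_def b_def)
  have P: "prob_space (uniform_measure lborel {a..b})"
    using ab by (intro prob_space_uniform_measure) auto
  note minimizer = sdei_minimizerD[OF m t s, of x, unfolded U sdei_cond_loss_def]
  have T: "integrable (uniform_measure lborel {a..b}) (sdei_target v fm x t)"
    and mean: "fm x t s = (\<integral>r. sdei_target v fm x t r \<partial>uniform_measure lborel {a..b})"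
    using prob_space.sq_loss_minimizer_eq_expectation[OF P minimizer] by blast+
  have "integral {a..b} (sdei_target v fm x t) = (b - a) *\<^sub>R fm x t s"
    using integral_uniform_measure_interval(2)[OF ab T] mean by simp
  then have "(s - t) *\<^sub>R fm x t s = oint t s (sdei_target v fm x t)"
    by (cases "t \<le> s") (auto simp: oint_def a_def b_def min_def max_def algebra_simps)
  then show ?thesis
    using integral_uniform_measure_interval(1)[OF ab T] by (simp add: a_def b_def)
qed

lemma sdei_minimizer_jump_bounded:
  assumes m: "sdei_minimizer v fm" and ab: "0 \<le> a" "b \<le> 1" "t \<in> {a..b}"
  shows "bounded ((\<lambda>s. x + (s - t) *\<^sub>R fm x t s) ` {a..b})"
proof -
  let ?T = "sdei_target v fm x t"
  have t: "t \<in> {0..1}" and in01: "\<And>r. r \<in> {a..b} \<Longrightarrow> r \<in> {0..1}"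
    using ab by auto
  note integral_equation = sdei_minimizer_integral_equation[OF m t in01, of _ x]
  have "{min t a..max t a} = {a..t}" "{min t b..max t b} = {t..b}"
    using ab by auto
  then have "?T absolutely_integrable_on {a..t}" "?T absolutely_integrable_on {t..b}"
    using integral_equation[of a] integral_equation[of b] ab(3) by auto
  then have T: "?T absolutely_integrable_on {a..b}"
    by (rule absolutely_integrable_on_combine) (use ab(3) in auto)
  have "norm (x + (s - t) *\<^sub>R fm x t s) \<le> norm x + integral {a..b} (\<lambda>r. norm (?T r))"
    if s: "s \<in> {a..b}" for s
  proof -
    have "norm (x + (s - t) *\<^sub>R fm x t s) \<le> norm x + norm (oint t s ?T)"
      using integral_equation[OF s] norm_triangle_ineq by metis
    then show ?thesis
      using norm_oint_le_integral_norm[OF T ab(3) s] by linarith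
  qed
  then show ?thesis
    unfolding bounded_iff by blast
qed

lemma is_flow_continuous_on:
  assumes "is_flow v Phi" and "t \<in> {0..1}"
  shows "continuous_on {0..1} (Phi x t)"
  using assms unfolding is_flow_def by (intro continuous_on_vector_derivative) blast

lemma is_flow_integral_equation:
  assumes flow: "is_flow v Phi" and t: "t \<in> {0..1}" and s: "s \<in> {0..1}"
  shows "(\<lambda>r. v (Phi x t r) r) integrable_on {min t s..max t s}
    \<and> Phi x t s = x + oint t s (\<lambda>r. v (Phi x t r) r)"
proof -
  have "(Phi x t has_vector_derivative v (Phi x t r) r) (at r within {min t s..max t s})"
    if "r \<in> {min t s..max t s}" for r
  proof (rule has_vector_derivative_within_subset)
    have "r \<in> {0..1}"
      using t s that by auto
    then show "(Phi x t has_vector_derivative v (Phi x t r) r) (at r within {0..1})"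
      using flow t unfolding is_flow_def by blast
  qed (use t s in auto)
  then show ?thesis
    using fundamental_theorem_of_calculus_oint[of t s "Phi x t"] flow t unfolding is_flow_def by auto
qed

lemma sdei_minimizer_eq_secant:
  fixes v :: "'a::euclidean_space \<Rightarrow> real \<Rightarrow> 'a"
  assumes lip: "\<forall>x1 x2. \<forall>\<tau>\<in>{0..1}. norm (v x1 \<tau> - v x2 \<tau>) \<le> L * norm (x1 - x2)"
    and flow: "is_flow v Phi" and m: "sdei_minimizer v fm"
    and ab: "0 \<le> a" "b \<le> 1" "t \<in> {a..b}" and short: "\<bar>L\<bar> * (b - a) < 1"
    and s: "s \<in> {a..b}"
  shows "fm x t s = secant v Phi x t s"
proof -
  define g where "g s = x + (s - t) *\<^sub>R fm x t s" for s
  have target: "sdei_target v fm x t = (\<lambda>r. v (g r) r)"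
    by (simp add: fun_eq_iff sdei_target_def g_def)
  have t: "t \<in> {0..1}" and in01: "\<And>r. r \<in> {a..b} \<Longrightarrow> r \<in> {0..1}"
    using ab by auto
  have "g s = Phi x t s"
  proof (rule integral_equation_solution_unique[where w = v and L = "\<bar>L\<bar>"])
    show "norm (v y r - v z r) \<le> \<bar>L\<bar> * norm (y - z)" if "r \<in> {a..b}" for y z r
      using lip in01[OF that] by (meson abs_ge_self mult_right_mono norm_ge_zero order_trans)
    show "bounded (g ` {a..b})"
      unfolding g_def by (rule sdei_minimizer_jump_bounded[OF m ab])
    have "continuous_on {a..b} (Phi x t)"
      by (rule continuous_on_subset[OF is_flow_continuous_on[OF flow t]]) (use in01 in blast)
    then show "bounded (Phi x t ` {a..b})"
      by (rule compact_imp_bounded[OF compact_continuous_image[OF _ compact_Icc]])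
    show "(\<lambda>r. v (g r) r) integrable_on {min t r..max t r} \<and> g r = x + oint t r (\<lambda>r. v (g r) r)"
      if "r \<in> {a..b}" for r
      using sdei_minimizer_integral_equation[OF m t in01[OF that], of x]
      by (auto simp: target g_def set_lebesgue_integral_eq_integral(1))
    show "(\<lambda>r. v (Phi x t r) r) integrable_on {min t r..max t r}
        \<and> Phi x t r = x + oint t r (\<lambda>r. v (Phi x t r) r)" if "r \<in> {a..b}" for r
      by (rule is_flow_integral_equation[OF flow t in01[OF that]])
  qed (use ab short s in auto)
  show ?thesis
  proof (cases "s = t")
    case True
    then show ?thesis
      using sdei_minimizer_diagonal[OF m t] by (simp add: secant_def)
  next
    case False
    have jump: "(s - t) *\<^sub>R fm x t s = oint t s (\<lambda>r. v (Phi x t r) r)"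
      using \<open>g s = Phi x t s\<close> is_flow_integral_equation[OF flow t in01[OF s], of x]
      by (simp add: g_def)
    have "fm x t s = (1 / (s - t)) *\<^sub>R ((s - t) *\<^sub>R fm x t s)"
      using False by simp
    then show ?thesis
      using False by (simp only: secant_def jump if_False)
  qed
qed

theorem theorem1:
  fixes v :: "'a::euclidean_space \<Rightarrow> real \<Rightarrow> 'a"
    and Phi :: "'a \<Rightarrow> real \<Rightarrow> real \<Rightarrow> 'a"
    and L t :: real
  assumes lip: "\<forall>x1 x2. \<forall>\<tau>\<in>{0..1}. norm (v x1 \<tau> - v x2 \<tau>) \<le> L * norm (x1 - x2)"
    and flow: "is_flow v Phi"
    and t: "t \<in> {0..1}"
  shows "\<exists>h>0. \<forall>f\<theta>. sdei_minimizer v f\<theta> \<longrightarrow>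
           (\<forall>x. \<forall>s\<in>{0..1}. \<bar>s - t\<bar> \<le> h \<longrightarrow> f\<theta> x t s = secant v Phi x t s)"
proof -
  define h where "h = 1 / (2 * (\<bar>L\<bar> + 1))"
  have h: "0 < h" "\<bar>L\<bar> * (2 * h) < 1"
    unfolding h_def by (auto simp: field_simps)
  have "\<bar>L\<bar> * (min 1 (t + h) - max 0 (t - h)) < 1"
    using h by (smt (verit) abs_ge_zero mult_left_mono)
  then have "f\<theta> x t s = secant v Phi x t s"
    if "sdei_minimizer v f\<theta>" "s \<in> {0..1}" "\<bar>s - t\<bar> \<le> h" for f\<theta> x s
    using sdei_minimizer_eq_secant[OF lip flow that(1), of "max 0 (t - h)" "min 1 (t + h)" t s x]
      t that(2,3) h(1) by (auto simp: abs_le_iff)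
  then show ?thesis
    using h(1) by blast
qed

end
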